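(* In the algebra $\mathcal O_q$ defined in the context, the following relations hold: $[\mathcal W_0,\tilde{\mathcal G}_1]=[\mathcal W_0,[\mathcal W_0,\mathcal W_1]_q]$ and $[\tilde{\mathcal G}_1,\mathcal W_1]=[[\mathcal W_0,\mathcal W_1]_q,\mathcal W_1]$.
   Context: All algebras are associative and unital over a field $\mathbb F$; $q\in\mathbb F$ is nonzero and not a root of unity. For elements $X,Y$ of an algebra, $[X,Y]=XY-YX$ and $[X,Y]_q=qXY-q^{-1}YX$. Let $\rho=-(q^2-q^{-2})^2$. The algebra $\mathcal O_q$ is defined by generators $\mathcal W_{-k},\mathcal W_{k+1},\mathcal G_{k+1},\tilde{\mathcal G}_{k+1}$ ($k\in\mathbb N$) and the following relations for all $k,\ell\in\mathbb N$: $[\mathcal W_0,\mathcal W_{k+1}]=[\mathcal W_{-k},\mathcal W_1]=(\tilde{\mathcal G}_{k+1}-\mathcal G_{k+1})/(q+q^{-1})$; $[\mathcal W_0,\mathcal G_{k+1}]_q=[\tilde{\mathcal G}_{k+1},\mathcal W_0]_q=\rho\mathcal W_{-k-1}-\rho\mathcal W_{k+1}$; $[\mathcal G_{k+1},\mathcal W_1]_q=[\mathcal W_1,\tilde{\mathcal G}_{k+1}]_q=\rho\mathcal W_{k+2}-\rho\mathcal W_{-k}$; $[\mathcal W_{-k},\mathcal W_{-\ell}]=0$, $[\mathcal W_{k+1},\mathcal W_{\ell+1}]=0$; $[\mathcal W_{-k},\mathcal W_{\ell+1}]+[\mathcal W_{k+1},\mathcal W_{-\ell}]=0$; $[\mathcal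 W_{-k},\mathcal G_{\ell+1}]+[\mathcal G_{k+1},\mathcal W_{-\ell}]=0$; $[\mathcal W_{-k},\tilde{\mathcal G}_{\ell+1}]+[\tilde{\mathcal G}_{k+1},\mathcal W_{-\ell}]=0$; $[\mathcal W_{k+1},\mathcal G_{\ell+1}]+[\mathcal G_{k+1},\mathcal W_{\ell+1}]=0$; $[\mathcal W_{k+1},\tilde{\mathcal G}_{\ell+1}]+[\tilde{\mathcal G}_{k+1},\mathcal W_{\ell+1}]=0$; $[\mathcal G_{k+1},\mathcal G_{\ell+1}]=0$, $[\tilde{\mathcal G}_{k+1},\tilde{\mathcal G}_{\ell+1}]=0$; $[\tilde{\mathcal G}_{k+1},\mathcal G_{\ell+1}]+[\mathcal G_{k+1},\tilde{\mathcal G}_{\ell+1}]=0$. *)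

theory Defs
  imports Main
begin

text \<open>A unital associative algebra over a field 'k is modelled as a ring 'a together
with a unital ring homomorphism emb from 'k into the centre of 'a (scalar
multiplication c.x is emb c * x).\<close>

definition algebra_emb :: "('k::field \<Rightarrow> 'a::ring_1) \<Rightarrow> bool" where
  "algebra_emb emb \<longleftrightarrow> emb 1 = 1 \<and> (\<forall>a b. emb (a + b) = emb a + emb b)
     \<and> (\<forall>a b. emb (a * b) = emb a * emb b) \<and> (\<forall>a x. emb a * x = x * emb a)"

definition comm :: "'a::ring \<Rightarrow> 'a \<Rightarrow> 'a" where
  "comm X Y = X * Y - Y * X"

definition qcomm :: "('k::field \<Rightarrow> 'a::ring_1) \<Rightarrow> 'k \<Rightarrow> 'a \<Rightarrow> 'a \<Rightarrow> 'a" where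
  "qcomm emb q X Y = emb q * X * Y - emb (inverse q) * Y * X"

definition not_root_of_unity :: "'k::field \<Rightarrow> bool" where
  "not_root_of_unity q \<longleftrightarrow> q \<noteq> 0 \<and> (\<forall>n::nat. n > 0 \<longrightarrow> q ^ n \<noteq> 1)"

text \<open>Generators: Wm k = W_{-k}, Wp k = W_{k+1}, G k = G_{k+1}, Gt k = tilde G_{k+1}.
  Oq_rel states that these elements satisfy all defining relations of O_q.\<close>

definition Oq_rel :: "('k::field \<Rightarrow> 'a::ring_1) \<Rightarrow> 'k \<Rightarrow>
    (nat \<Rightarrow> 'a) \<Rightarrow> (nat \<Rightarrow> 'a) \<Rightarrow> (nat \<Rightarrow> 'a) \<Rightarrow> (nat \<Rightarrow> 'a) \<Rightarrow> bool" where
  "Oq_rel emb q Wm Wp G Gt \<longleftrightarrow>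
    (let \<rho> = - ((q\<^sup>2 - inverse (q\<^sup>2))\<^sup>2) in
    (\<forall>k. comm (Wm 0) (Wp k) = emb (inverse (q + inverse q)) * (Gt k - G k)) \<and>
    (\<forall>k. comm (Wm k) (Wp 0) = emb (inverse (q + inverse q)) * (Gt k - G k)) \<and>
    (\<forall>k. qcomm emb q (Wm 0) (G k) = emb \<rho> * Wm (Suc k) - emb \<rho> * Wp k) \<and>
    (\<forall>k. qcomm emb q (Gt k) (Wm 0) = emb \<rho> * Wm (Suc k) - emb \<rho> * Wp k) \<and>
    (\<forall>k. qcomm emb q (G k) (Wp 0) = emb \<rho> * Wp (Suc k) - emb \<rho> * Wm k) \<and>
    (\<forall>k. qcomm emb q (Wp 0) (Gt k) = emb \<rho> * Wp (Suc k) - emb \<rho> * Wm k) \<and>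
    (\<forall>k l. comm (Wm k) (Wm l) = 0) \<and>
    (\<forall>k l. comm (Wp k) (Wp l) = 0) \<and>
    (\<forall>k l. comm (Wm k) (Wp l) + comm (Wp k) (Wm l) = 0) \<and>
    (\<forall>k l. comm (Wm k) (G l) + comm (G k) (Wm l) = 0) \<and>
    (\<forall>k l. comm (Wm k) (Gt l) + comm (Gt k) (Wm l) = 0) \<and>
    (\<forall>k l. comm (Wp k) (G l) + comm (G k) (Wp l) = 0) \<and>
    (\<forall>k l. comm (Wp k) (Gt l) + comm (Gt k) (Wp l) = 0) \<and>
    (\<forall>k l. comm (G k) (G l) = 0) \<and>
    (\<forall>k l. comm (Gt k) (Gt l) = 0) \<and>
    (\<forall>k l. comm (Gt k) (G l) + comm (G k) (Gt l) = 0))"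

end

theory Submission
  imports Defs
begin

text \<open>Let c = q + 1/q. For any X, Y one has [X,Y]_q - [Y,X]_q = c [X,Y], and the first
  defining relation says G~_1 - G_1 = c [W_0,W_1]. Using [W_0,G_1]_q = [G~_1,W_0]_q therefore
  c [W_0,G~_1] = [W_0,G~_1]_q - [W_0,G_1]_q = c [W_0,[W_0,W_1]]_q, and [W_0,[W_0,W_1]]_q equals
  [W_0,[W_0,W_1]_q] in any algebra. Because q is not a root of unity, c is nonzero and can be
  cancelled. The relation for [G~_1,W_1] follows in the same way from [G_1,W_1]_q = [W_1,G~_1]_q.\<close>

lemma algebra_emb_central: "algebra_emb emb \<Longrightarrow> emb c * x = x * emb c"
  unfolding algebra_emb_def by blast

lemma algebra_emb_add: "algebra_emb emb \<Longrightarrow> emb (c + d) = emb c + emb d"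
  unfolding algebra_emb_def by blast

lemma algebra_emb_mult: "algebra_emb emb \<Longrightarrow> emb (c * d) = emb c * emb d"
  unfolding algebra_emb_def by blast

lemma algebra_emb_one: "algebra_emb emb \<Longrightarrow> emb 1 = 1"
  unfolding algebra_emb_def by blast

lemma algebra_emb_left_commute: "algebra_emb emb \<Longrightarrow> x * (emb c * y) = emb c * (x * y)"
  by (metis algebra_emb_central mult.assoc)

lemma algebra_emb_mult_inverse:
  assumes emb: "algebra_emb emb" and "c \<noteq> 0"
  shows "emb c * (emb (inverse c) * x) = x"
proof -
  have "emb c * emb (inverse c) = emb (c * inverse c)"
    by (rule algebra_emb_mult[OF emb, symmetric])
  also have "\<dots> = 1"
    using \<open>c \<noteq> 0\<close> by (simp add: algebra_emb_one[OF emb])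
  finally show ?thesis
    by (simp only: mult.assoc[symmetric] mult_1_left)
qed

lemma algebra_emb_mult_cancel:
  assumes emb: "algebra_emb emb" and "c \<noteq> 0" and eq: "emb c * x = emb c * y"
  shows "x = y"
proof -
  have "x = emb (inverse c) * (emb c * x)" and "y = emb (inverse c) * (emb c * y)"
    using algebra_emb_mult_inverse[OF emb, of "inverse c"] \<open>c \<noteq> 0\<close> by simp_all
  with eq show ?thesis
    by simp
qed

lemma qcomm_diff_right: "qcomm emb q X (Y - Z) = qcomm emb q X Y - qcomm emb q X Z"
  by (simp add: qcomm_def algebra_simps)

lemma qcomm_diff_left: "qcomm emb q (Y - Z) X = qcomm emb q Y X - qcomm emb q Z X"
  by (simp add: qcomm_def algebra_simps)

lemma qcomm_scale_right:
  assumes "algebra_emb emb"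
  shows "qcomm emb q X (emb c * Y) = emb c * qcomm emb q X Y"
  using algebra_emb_left_commute[OF assms, of X] algebra_emb_left_commute[OF assms, of "emb q"]
    algebra_emb_left_commute[OF assms, of "emb (inverse q)"]
  unfolding qcomm_def by (simp add: right_diff_distrib mult.assoc)

lemma qcomm_scale_left:
  assumes "algebra_emb emb"
  shows "qcomm emb q (emb c * Y) X = emb c * qcomm emb q Y X"
  using algebra_emb_left_commute[OF assms, of X] algebra_emb_left_commute[OF assms, of "emb q"]
    algebra_emb_left_commute[OF assms, of "emb (inverse q)"]
  unfolding qcomm_def by (simp add: right_diff_distrib mult.assoc)

lemma qcomm_diff_swap:
  "algebra_emb emb \<Longrightarrow> qcomm emb q X Y - qcomm emb q Y X = emb (q + inverse q) * comm X Y"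
  by (simp add: qcomm_def comm_def algebra_simps algebra_emb_add)

lemma qcomm_comm_left:
  assumes "algebra_emb emb"
  shows "qcomm emb q X (comm X Y) = comm X (qcomm emb q X Y)"
  using algebra_emb_left_commute[OF assms, of X] algebra_emb_left_commute[OF assms, of Y]
  unfolding qcomm_def comm_def by (simp add: right_diff_distrib left_diff_distrib mult.assoc)

lemma qcomm_comm_right:
  assumes "algebra_emb emb"
  shows "qcomm emb q (comm X Y) Y = comm (qcomm emb q X Y) Y"
  using algebra_emb_left_commute[OF assms, of X] algebra_emb_left_commute[OF assms, of Y]
  unfolding qcomm_def comm_def by (simp add: right_diff_distrib left_diff_distrib mult.assoc)

lemma not_root_of_unity_add_inverse_nonzero:
  assumes "not_root_of_unity q"
  shows "q + inverse q \<noteq> 0"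
proof
  assume sum: "q + inverse q = 0"
  have "q \<noteq> 0"
    using assms unfolding not_root_of_unity_def by blast
  then have "q\<^sup>2 + 1 = q * (q + inverse q)"
    by (simp add: distrib_left power2_eq_square)
  with sum have "q\<^sup>2 = -1"
    by (simp add: eq_neg_iff_add_eq_0)
  then have "q ^ 4 = 1"
    using power_mult[of q 2 2] by simp
  with assms show False
    unfolding not_root_of_unity_def by (metis zero_less_numeral)
qed

context
  fixes emb :: "'k::field \<Rightarrow> 'a::ring_1" and q :: 'k and X Y G Gt :: 'a
  assumes emb: "algebra_emb emb"
    and q: "not_root_of_unity q"
    and comm_XY: "comm X Y = emb (inverse (q + inverse q)) * (Gt - G)"
begin

lemma diff_eq_scaled_comm: "Gt - G = emb (q + inverse q) * comm X Y"
  using algebra_emb_mult_inverse[OF emb not_root_of_unity_add_inverse_nonzero[OF q]]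
  by (simp add: comm_XY)

lemma comm_left_eq_comm_qcomm:
  assumes "qcomm emb q X G = qcomm emb q Gt X"
  shows "comm X Gt = comm X (qcomm emb q X Y)"
proof (rule algebra_emb_mult_cancel[OF emb not_root_of_unity_add_inverse_nonzero[OF q]])
  have "emb (q + inverse q) * comm X Gt = qcomm emb q X Gt - qcomm emb q X G"
    by (simp add: assms qcomm_diff_swap[OF emb])
  also have "\<dots> = emb (q + inverse q) * qcomm emb q X (comm X Y)"
    by (simp add: qcomm_diff_right[symmetric] diff_eq_scaled_comm qcomm_scale_right[OF emb])
  finally show "emb (q + inverse q) * comm X Gt = emb (q + inverse q) * comm X (qcomm emb q X Y)"
    by (simp add: qcomm_comm_left[OF emb])
qed

lemma comm_right_eq_comm_qcomm:
  assumes "qcomm emb q G Y = qcomm emb q Y Gt"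
  shows "comm Gt Y = comm (qcomm emb q X Y) Y"
proof (rule algebra_emb_mult_cancel[OF emb not_root_of_unity_add_inverse_nonzero[OF q]])
  have "emb (q + inverse q) * comm Gt Y = qcomm emb q Gt Y - qcomm emb q G Y"
    by (simp add: assms qcomm_diff_swap[OF emb])
  also have "\<dots> = emb (q + inverse q) * qcomm emb q (comm X Y) Y"
    by (simp add: qcomm_diff_left[symmetric] diff_eq_scaled_comm qcomm_scale_left[OF emb])
  finally show "emb (q + inverse q) * comm Gt Y = emb (q + inverse q) * comm (qcomm emb q X Y) Y"
    by (simp add: qcomm_comm_right[OF emb])
qed

end

theorem lemma4p8:
  fixes emb :: "'k::field \<Rightarrow> 'a::ring_1" and q :: 'k
    and Wm Wp G Gt :: "nat \<Rightarrow> 'a"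
  assumes "algebra_emb emb"
    and "not_root_of_unity q"
    and "Oq_rel emb q Wm Wp G Gt"
  shows "comm (Wm 0) (Gt 0) = comm (Wm 0) (qcomm emb q (Wm 0) (Wp 0))
    \<and> comm (Gt 0) (Wp 0) = comm (qcomm emb q (Wm 0) (Wp 0)) (Wp 0)"
proof -
  from assms(3) have
    comm: "comm (Wm 0) (Wp 0) = emb (inverse (q + inverse q)) * (Gt 0 - G 0)" and
    left: "qcomm emb q (Wm 0) (G 0) = qcomm emb q (Gt 0) (Wm 0)" and
    right: "qcomm emb q (G 0) (Wp 0) = qcomm emb q (Wp 0) (Gt 0)"
    unfolding Oq_rel_def Let_def by simp_all
  show ?thesis
    using comm_left_eq_comm_qcomm[OF assms(1,2) comm left]
      comm_right_eq_comm_qcomm[OF assms(1,2) comm right] by blast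
qed

end
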